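(* Let $\overline\eta\in(-\frac{\pi}{2},\frac{\pi}{2})^m$ and $\overline V\in\mathbb{R}^n_{>0}$ satisfy $E(\overline\eta)\overline V=\overline E_{fd}$ and \[ E(\overline\eta)-\mathrm{diag}(\overline V)^{-1}|D|\Gamma(\overline V)\mathrm{diag}(\boldsymbol{\sin}(\overline\eta))\mathrm{diag}(\boldsymbol{\cos}(\overline\eta))^{-1}\mathrm{diag}(\boldsymbol{\sin}(\overline\eta))|D|^T\mathrm{diag}(\overline V)^{-1}>0. \quad (\ast) \] Then the function \[ W_2(\eta,\overline\eta,V,\overline V)=-\mathbf{1}_m^T\Gamma(V)\boldsymbol{\cos}(\eta)+\mathbf{1}_m^T\Gamma(\overline V)\boldsymbol{\cos}(\overline\eta)-(\Gamma(\overline V)\boldsymbol{\sin}(\overline\eta))^T(\eta-\overline\eta)-\overline E_{fd}^T(V-\overline V)+\tfrac12V^TFV-\tfrac12\overline V^TF\overline V, \] where $F$ is the diagonal matrix with $F_{ii}=\frac{1-B_{ii}(X_{di}-X'_{di})}{X_{di}-X'_{di}}$, has a strict local minimum (as a function of $(\eta,V)$) at $(\overline\eta,\overline V)$.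
   Context: Standing setup (power network model). $\mathcal{G}=(\mathcal{V},\mathcal{E})$ is a connected undirected graph with node set $\{1,\dots,n\}$ and $m$ edges; each edge $k=\{i,j\}$ is given an arbitrary orientation, and $D\in\mathbb{R}^{n\times m}$ is the incidence matrix: $d_{ik}=+1$ if $i$ is the positive end of edge $k$, $-1$ if $i$ is the negative end, $0$ otherwise. $|D|$ denotes the matrix of entrywise absolute values of $D$. $\mathbf{1}_n$ is the all-ones vector. For each edge $k=\{i,j\}$ there is a susceptance $B_{ij}=B_{ji}>0$; each node has a self-susceptance $B_{ii}<0$ with $|B_{ii}|>\sum_{j\in\mathcal{N}_i}|B_{ij}|$ ($\mathcal{N}_i$ the neighbours of $i$ in $\mathcal{G}$), and reactances $X_{di}>X'_{di}>0$. For $V\in\mathbb{R}^n$, $\Gamma(V)=\mathrm{diag}(\gamma_1,\dots,\gamma_m)$ with $\gamma_k=V_iV_jB_{ij}$ for edge $k=\{i,j\}$. For $\eta\in\mathbb{R}^m$, $E(\eta)\in\mathbb{R}^{n\times n}$ is the symmetric matrix with $E_{ii}=\frac{1-B_{ii}(X_{di}-X'_{di})}{X_{di}-X'_{di}}$, $E_{ij}=-B_{ij}\cos(\eta_k)$ if $k=\{i,j\}$ is an edge, and $E_{ij}=0$ otherwise. $\boldsymbol{\sin}$, $\boldsymbol{\cos}$ act componentwise. $M,A,T$ are diagonal positive definite $n\times n$ matrices ($A=\mathrm{diag}(A_i)$), and $\overline E_{fd}\in\mathbb{R}^n$ is a constant vector. The network dynamics, with input $u\in\mathbb{R}^n$ (power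 generation) and demand $P^l$, are \[ \dot\eta=D^T\omega,\quad M\dot\omega=u-D\Gamma(V)\boldsymbol{\sin}(\eta)-A\omega-P^l,\quad T\dot V=-E(\eta)V+\overline E_{fd},\quad y=\omega, \] with state $(\eta,\omega,V)\in\mathbb{R}^m\times\mathbb{R}^n\times\mathbb{R}^n$. *)

theory Defs
  imports "HOL-Analysis.Analysis"
begin

text \<open>Graph: nodes are the finite type 'n, edges the finite type 'm. Edge k has
  positive end pe k and negative end ne k (arbitrary orientation), so edge k = {pe k, ne k}.\<close>

definition edge_joins :: "('m \<Rightarrow> 'n) \<Rightarrow> ('m \<Rightarrow> 'n) \<Rightarrow> 'm \<Rightarrow> 'n \<Rightarrow> 'n \<Rightarrow> bool" where
  "edge_joins pe ne k i j \<longleftrightarrow> (pe k = i \<and> ne k = j) \<or> (pe k = j \<and> ne k = i)"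

definition adjacent :: "('m \<Rightarrow> 'n) \<Rightarrow> ('m \<Rightarrow> 'n) \<Rightarrow> 'n \<Rightarrow> 'n \<Rightarrow> bool" where
  "adjacent pe ne i j \<longleftrightarrow> (\<exists>k. edge_joins pe ne k i j)"

definition neighbours :: "('m \<Rightarrow> 'n) \<Rightarrow> ('m \<Rightarrow> 'n) \<Rightarrow> 'n \<Rightarrow> 'n set" where
  "neighbours pe ne i = {j. adjacent pe ne i j}"

definition simple_connected_graph :: "('m \<Rightarrow> 'n) \<Rightarrow> ('m \<Rightarrow> 'n) \<Rightarrow> bool" where
  "simple_connected_graph pe ne \<longleftrightarrow>
     (\<forall>k. pe k \<noteq> ne k) \<and>
     (\<forall>k l. {pe k, ne k} = {pe l, ne l} \<longrightarrow> k = l) \<and>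
     (\<forall>i j. (adjacent pe ne)\<^sup>*\<^sup>* i j)"

definition incidence :: "('m::finite \<Rightarrow> 'n::finite) \<Rightarrow> ('m \<Rightarrow> 'n) \<Rightarrow> real^'m^'n" where
  "incidence pe ne = (\<chi> i k. if i = pe k then 1 else if i = ne k then -1 else 0)"

definition abs_mat :: "real^'m^'n \<Rightarrow> real^'m^'n" where
  "abs_mat A = (\<chi> i k. \<bar>A $ i $ k\<bar>)"

definition diagm :: "real^'n \<Rightarrow> real^'n^'n" where
  "diagm v = (\<chi> i j. if i = j then v $ i else 0)"

definition vsin :: "real^'m \<Rightarrow> real^'m" where "vsin x = (\<chi> k. sin (x $ k))"
definition vcos :: "real^'m \<Rightarrow> real^'m" where "vcos x = (\<chi> k. cos (x $ k))"

definition gam :: "('m::finite \<Rightarrow> 'n::finite) \<Rightarrow> ('m \<Rightarrow> 'n) \<Rightarrow> real^'n^'n \<Rightarrow> real^'n \<Rightarrow> real^'m" where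
  "gam pe ne B V = (\<chi> k. V $ pe k * V $ ne k * B $ pe k $ ne k)"

definition Gamma :: "('m::finite \<Rightarrow> 'n::finite) \<Rightarrow> ('m \<Rightarrow> 'n) \<Rightarrow> real^'n^'n \<Rightarrow> real^'n \<Rightarrow> real^'m^'m" where
  "Gamma pe ne B V = diagm (gam pe ne B V)"

definition Fdiag :: "real^'n^'n \<Rightarrow> real^'n \<Rightarrow> real^'n \<Rightarrow> real^'n" where
  "Fdiag B Xd Xdp = (\<chi> i. (1 - B $ i $ i * (Xd $ i - Xdp $ i)) / (Xd $ i - Xdp $ i))"

definition Fmat :: "real^'n^'n \<Rightarrow> real^'n \<Rightarrow> real^'n \<Rightarrow> real^'n^'n" where
  "Fmat B Xd Xdp = diagm (Fdiag B Xd Xdp)"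

definition Emat :: "('m::finite \<Rightarrow> 'n::finite) \<Rightarrow> ('m \<Rightarrow> 'n) \<Rightarrow> real^'n^'n \<Rightarrow> real^'n \<Rightarrow> real^'n
                    \<Rightarrow> real^'m \<Rightarrow> real^'n^'n" where
  "Emat pe ne B Xd Xdp eta = (\<chi> i j.
     if i = j then Fdiag B Xd Xdp $ i
     else if adjacent pe ne i j then - B $ i $ j * cos (eta $ (THE k. edge_joins pe ne k i j))
     else 0)"

definition pos_def :: "real^'n^'n \<Rightarrow> bool" where
  "pos_def M \<longleftrightarrow> transpose M = M \<and> (\<forall>x. x \<noteq> 0 \<longrightarrow> x \<bullet> (M *v x) > 0)"

definition W2 :: "('m::finite \<Rightarrow> 'n::finite) \<Rightarrow> ('m \<Rightarrow> 'n) \<Rightarrow> real^'n^'n \<Rightarrow> real^'n \<Rightarrow> real^'n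
                  \<Rightarrow> real^'n \<Rightarrow> real^'m \<Rightarrow> real^'m \<Rightarrow> real^'n \<Rightarrow> real^'n \<Rightarrow> real" where
  "W2 pe ne B Xd Xdp Efd eta etab V Vb =
     - (1 \<bullet> (Gamma pe ne B V *v vcos eta))
     + (1 \<bullet> (Gamma pe ne B Vb *v vcos etab))
     - (Gamma pe ne B Vb *v vsin etab) \<bullet> (eta - etab)
     - Efd \<bullet> (V - Vb)
     + (1/2) * (V \<bullet> (Fmat B Xd Xdp *v V))
     - (1/2) * (Vb \<bullet> (Fmat B Xd Xdp *v Vb))"

definition strict_local_min :: "('a::metric_space \<Rightarrow> real) \<Rightarrow> 'a \<Rightarrow> bool" where
  "strict_local_min f x0 \<longleftrightarrow> (\<exists>e>0. \<forall>x. x \<noteq> x0 \<and> dist x x0 < e \<longrightarrow> f x0 < f x)"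

end

theory Submission
  imports Defs
begin

text \<open>Write \<open>(\<eta>, V) = (\<eta>\<^sub>0 + x, V\<^sub>0 + v)\<close> for the equilibrium \<open>(\<eta>\<^sub>0, V\<^sub>0)\<close>. The equilibrium
  equation \<open>E(\<eta>\<^sub>0) V\<^sub>0 = E\<^sub>f\<^sub>d\<close> cancels all first-order terms, so \<open>W\<^sub>2\<close> is its second-order part
  \<open>q(x, v)\<close> plus a remainder that Taylor's theorem for sin and cos bounds by a constant times
  \<open>\<parallel>(x, v)\<parallel>\<^sup>3\<close>. Completing the square in each line angle \<open>x\<^sub>k\<close> gives
  \<open>2 q(x, v) = v\<^sup>T S v + \<Sum>\<^sub>k \<gamma>\<^sub>k cos \<eta>\<^sub>0\<^sub>k (x\<^sub>k + tan \<eta>\<^sub>0\<^sub>k w\<^sub>k)\<^sup>2\<close> with \<open>w = |D|\<^sup>T diag(V\<^sub>0)\<^sup>-\<^sup>1 v\<close>,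
  where \<open>S\<close> is the matrix of condition (*), the Schur complement of the angle block of the Hessian.
  Hence \<open>q\<close> is positive definite, so \<open>q(x, v) \<ge> a \<parallel>(x, v)\<parallel>\<^sup>2\<close> by compactness of the unit sphere, and
  this dominates the cubic remainder near the equilibrium.\<close>

lemma sin_taylor_remainder: "\<bar>sin x - x\<bar> \<le> \<bar>x :: real\<bar> ^ 3 / 6"
  using Maclaurin_sin_bound[of x 3]
  by (simp add: sin_coeff_def numeral_3_eq_3 lessThan_Suc fact_numeral)

lemma cos_taylor_remainder: "\<bar>cos x - (1 - x\<^sup>2 / 2)\<bar> \<le> \<bar>x :: real\<bar> ^ 3 / 6"
proof -
  obtain t where t: "cos x = (\<Sum>m<3. cos_coeff m * x ^ m) + cos (t + 1/2 * real 3 * pi) / fact 3 * x ^ 3"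
    using Maclaurin_cos_expansion[of x 3] by blast
  have "(\<Sum>m<3. cos_coeff m * x ^ m) = 1 - x\<^sup>2 / 2"
    by (simp add: cos_coeff_def numeral_3_eq_3 lessThan_Suc fact_numeral power2_eq_square)
  with t have "\<bar>cos x - (1 - x\<^sup>2 / 2)\<bar> = \<bar>cos (t + 1/2 * real 3 * pi)\<bar> / 6 * \<bar>x\<bar> ^ 3"
    by (simp add: abs_mult power_abs fact_numeral)
  also have "\<dots> \<le> \<bar>x\<bar> ^ 3 / 6"
    by (simp add: mult_left_le_one_le)
  finally show ?thesis .
qed

text \<open>The share of line \<open>k\<close> in \<open>W\<^sub>2(\<eta>\<^sub>0 + x, V\<^sub>0 + v)\<close>, with \<open>t = \<eta>\<^sub>0\<^sub>k\<close>, \<open>Vi, Vj\<close> the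
  equilibrium voltages at its ends and \<open>p, q\<close> their increments; the last summand is the line's share of
  \<open>- E\<^sub>f\<^sub>d\<^sup>T v\<close> (see \<open>W2_expand\<close>).\<close>

definition edge_energy :: "real \<Rightarrow> real \<Rightarrow> real \<Rightarrow> real \<Rightarrow> real \<Rightarrow> real \<Rightarrow> real" where
  "edge_energy t Vi Vj x p q =
     Vi * Vj * cos t - (Vi + p) * (Vj + q) * cos (t + x) - Vi * Vj * sin t * x + cos t * (Vj * p + Vi * q)"

definition edge_quadratic :: "real \<Rightarrow> real \<Rightarrow> real \<Rightarrow> real \<Rightarrow> real \<Rightarrow> real \<Rightarrow> real" where
  "edge_quadratic t Vi Vj x p q = cos t * (Vi * Vj * x\<^sup>2 / 2 - p * q) + sin t * x * (Vj * p + Vi * q)"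

lemma edge_energy_minus_quadratic:
  "edge_energy t Vi Vj x p q - edge_quadratic t Vi Vj x p q =
     (Vj * p + Vi * q + p * q) * cos t * x\<^sup>2 / 2 + p * q * sin t * x
     + (Vi + p) * (Vj + q) * (cos t * ((1 - cos x) - x\<^sup>2 / 2) + sin t * (sin x - x))"
  by (simp add: edge_energy_def edge_quadratic_def cos_add algebra_simps power2_eq_square)

lemma edge_energy_taylor:
  fixes t Vi Vj x p q r :: real
  assumes "0 < Vi" "0 < Vj" "\<bar>x\<bar> \<le> r" "\<bar>p\<bar> \<le> r" "\<bar>q\<bar> \<le> r" "r \<le> 1"
  shows "\<bar>edge_energy t Vi Vj x p q - edge_quadratic t Vi Vj x p q\<bar> \<le> 4 * (Vi + 1) * (Vj + 1) * r ^ 3"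
proof -
  have r: "0 \<le> r" using assms(3) by linarith
  have pq: "\<bar>p * q\<bar> \<le> r"
    using mult_mono[OF assms(4,5)] assms(6) r by (simp add: abs_mult) (smt (verit) mult_right_le_one_le)
  have lin: "\<bar>Vj * p + Vi * q + p * q\<bar> \<le> (Vi + Vj + 1) * r"
  proof -
    have "\<bar>Vj * p\<bar> \<le> Vj * r" "\<bar>Vi * q\<bar> \<le> Vi * r"
      using assms by (simp_all add: abs_mult mult_left_mono)
    with pq show ?thesis by (simp add: algebra_simps)
  qed
  have x2: "x\<^sup>2 \<le> r\<^sup>2" using assms(3) by (simp add: abs_le_square_iff power2_le_iff_abs_le r)
  have prod: "\<bar>(Vi + p) * (Vj + q)\<bar> \<le> (Vi + 1) * (Vj + 1)"
    unfolding abs_mult using assms by (intro mult_mono) auto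
  have x3: "\<bar>x\<bar> ^ 3 \<le> r ^ 3" using assms(3) by (simp add: power_mono)
  have rem: "\<bar>cos t * ((1 - cos x) - x\<^sup>2 / 2) + sin t * (sin x - x)\<bar> \<le> r ^ 3 / 3"
  proof -
    have "\<bar>(1 - cos x) - x\<^sup>2 / 2\<bar> \<le> r ^ 3 / 6" "\<bar>sin x - x\<bar> \<le> r ^ 3 / 6"
      using cos_taylor_remainder[of x] sin_taylor_remainder[of x] x3 by linarith+
    then have "\<bar>cos t * ((1 - cos x) - x\<^sup>2 / 2)\<bar> \<le> r ^ 3 / 6" "\<bar>sin t * (sin x - x)\<bar> \<le> r ^ 3 / 6"
      unfolding abs_mult using abs_cos_le_one[of t] abs_sin_le_one[of t]
      by (meson abs_ge_zero mult_left_le_one_le order_trans)+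
    then show ?thesis
      using abs_triangle_ineq[of "cos t * ((1 - cos x) - x\<^sup>2 / 2)" "sin t * (sin x - x)"] by linarith
  qed
  have bound_x2: "\<bar>(Vj * p + Vi * q + p * q) * cos t * x\<^sup>2 / 2\<bar> \<le> (Vi + Vj + 1) * r ^ 3 / 2"
  proof -
    have c: "\<bar>(Vj * p + Vi * q + p * q) * cos t\<bar> \<le> (Vi + Vj + 1) * r"
      unfolding abs_mult using lin abs_cos_le_one[of t]
      by (meson abs_ge_zero mult_right_le_one_le order_trans)
    have "\<bar>(Vj * p + Vi * q + p * q) * cos t * x\<^sup>2 / 2\<bar> = \<bar>(Vj * p + Vi * q + p * q) * cos t\<bar> * x\<^sup>2 / 2"
      by (simp add: abs_mult)
    also have "\<dots> \<le> (Vi + Vj + 1) * r * r\<^sup>2 / 2"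
      using divide_right_mono[OF mult_mono[OF c x2 _ zero_le_power2], of 2] r assms(1,2) by simp
    also have "\<dots> = (Vi + Vj + 1) * r ^ 3 / 2"
      by (simp add: power2_eq_square power3_eq_cube)
    finally show ?thesis .
  qed
  have bound_pqx: "\<bar>p * q * sin t * x\<bar> \<le> r ^ 3"
  proof -
    have "\<bar>p * q * sin t * x\<bar> = \<bar>p\<bar> * \<bar>q\<bar> * \<bar>sin t\<bar> * \<bar>x\<bar>"
      by (simp add: abs_mult)
    also have "\<dots> \<le> r * r * 1 * r"
      by (intro mult_mono) (use assms r in auto)
    finally show ?thesis by (simp add: power3_eq_cube)
  qed
  have bound_taylor: "\<bar>(Vi + p) * (Vj + q) * (cos t * ((1 - cos x) - x\<^sup>2 / 2) + sin t * (sin x - x))\<bar>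
      \<le> (Vi + 1) * (Vj + 1) * (r ^ 3 / 3)"
    unfolding abs_mult[of "(Vi + p) * (Vj + q)"] by (rule mult_mono[OF prod rem]) (use assms in auto)
  have "Vi + Vj + 1 \<le> (Vi + 1) * (Vj + 1)"
    using assms(1,2) by (simp add: algebra_simps)
  then have "(Vi + Vj + 1) / 2 + 1 + (Vi + 1) * (Vj + 1) / 3 \<le> 4 * ((Vi + 1) * (Vj + 1))"
    using assms(1,2) by argo
  from mult_right_mono[OF this, of "r ^ 3"]
  have "(Vi + Vj + 1) * r ^ 3 / 2 + r ^ 3 + (Vi + 1) * (Vj + 1) * (r ^ 3 / 3) \<le> 4 * (Vi + 1) * (Vj + 1) * r ^ 3"
    using r by (simp add: algebra_simps)
  then show ?thesis
    unfolding edge_energy_minus_quadratic using bound_x2 bound_pqx bound_taylor by linarith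
qed

lemma quadratic_growth_of_homogeneous:
  fixes f :: "'a::euclidean_space \<Rightarrow> real"
  assumes cont: "continuous_on UNIV f"
    and hom: "\<And>t z. f (t *\<^sub>R z) = t\<^sup>2 * f z"
    and pos: "\<And>z. z \<noteq> 0 \<Longrightarrow> 0 < f z"
  obtains a where "0 < a" "\<And>z. a * (norm z)\<^sup>2 \<le> f z"
proof -
  obtain u where u: "u \<in> sphere 0 1" and min: "\<And>y. y \<in> sphere 0 1 \<Longrightarrow> f u \<le> f y"
    using continuous_attains_inf[OF compact_sphere _ continuous_on_subset[OF cont subset_UNIV], of 0 1]
    by auto
  have "f u * (norm z)\<^sup>2 \<le> f z" for z
  proof (cases "z = 0")
    case True
    then show ?thesis using hom[of 0 z] by simp
  next
    case False
    then have "f z = (norm z)\<^sup>2 * f (z /\<^sub>R norm z)"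
      using hom[of "norm z" "z /\<^sub>R norm z"] by simp
    moreover have "f u \<le> f (z /\<^sub>R norm z)" using False by (intro min) simp
    ultimately show ?thesis by (metis mult.commute mult_right_mono zero_le_power2)
  qed
  moreover have "0 < f u" using u by (intro pos) auto
  ultimately show ?thesis using that by blast
qed

lemma strict_local_min_of_quadratic_growth:
  fixes f :: "'a::real_normed_vector \<Rightarrow> real"
  assumes "0 < a"
    and growth: "\<And>h. norm h \<le> 1 \<Longrightarrow> a * (norm h)\<^sup>2 - K * norm h ^ 3 \<le> f (z0 + h) - f z0"
  shows "strict_local_min f z0"
  unfolding strict_local_min_def
proof (intro exI conjI allI impI)
  define e where "e = min 1 (a / (\<bar>K\<bar> + 1))"
  show "0 < e" using \<open>0 < a\<close> by (simp add: e_def)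
  fix z assume z: "z \<noteq> z0 \<and> dist z z0 < e"
  define r where "r = norm (z - z0)"
  have r: "0 < r" "r \<le> 1" "r * (\<bar>K\<bar> + 1) < a"
    using z by (auto simp: r_def dist_norm e_def field_simps)
  have "K * r \<le> \<bar>K\<bar> * r" "r * (\<bar>K\<bar> + 1) = \<bar>K\<bar> * r + r"
    using r(1) by (simp_all add: mult_right_mono algebra_simps)
  with r have "K * r < a" by linarith
  then have "0 < r\<^sup>2 * (a - K * r)" using r by simp
  also have "\<dots> \<le> f z - f z0"
    using growth[of "z - z0"] r(2) unfolding r_def[symmetric]
    by (simp add: power2_eq_square power3_eq_cube algebra_simps)
  finally show "f z0 < f z" by simp
qed

lemma matrix_vector_mult_diagm: "(diagm d *v y) $ k = d $ k * y $ k"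
  by (simp add: diagm_def matrix_vector_mult_def if_distrib if_distribR cong: if_cong)

lemma diagm_mult_diagm: "diagm d ** diagm e = diagm (\<chi> i. d $ i * e $ i)"
proof -
  have "(if i = k then d $ i else 0) * (if k = j then e $ k else 0) = (if k = i \<and> i = j then d $ i * e $ i else 0)"
    for i j k
    by simp
  then show ?thesis by (simp add: diagm_def matrix_matrix_mult_def vec_eq_iff)
qed

lemma matrix_inv_unique:
  fixes A :: "real^'n^'n"
  assumes "A ** A' = mat 1" "A' ** A = mat 1"
  shows "matrix_inv A = A'"
proof -
  have inv: "A ** matrix_inv A = mat 1 \<and> matrix_inv A ** A = mat 1"
    unfolding matrix_inv_def by (rule someI[of _ A']) (use assms in simp)
  have "matrix_inv A = matrix_inv A ** (A ** A')" using assms by simp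
  also have "\<dots> = A'" using inv by (simp add: matrix_mul_assoc)
  finally show ?thesis .
qed

lemma matrix_inv_diagm:
  assumes "\<And>i. d $ i \<noteq> (0::real)"
  shows "matrix_inv (diagm d) = diagm (\<chi> i. 1 / d $ i)"
  by (rule matrix_inv_unique) (simp_all add: diagm_mult_diagm assms, simp_all add: mat_def diagm_def vec_eq_iff)

locale oriented_simple_graph =
  fixes pe ne :: "'m::finite \<Rightarrow> 'n::finite"
  assumes simple_connected: "simple_connected_graph pe ne"
begin

lemma ends_distinct: "pe k \<noteq> ne k"
  using simple_connected by (simp add: simple_connected_graph_def)

lemma edge_eqI: "{pe k, ne k} = {pe l, ne l} \<Longrightarrow> k = l"
  using simple_connected by (simp add: simple_connected_graph_def)

lemma not_adjacent_self: "\<not> adjacent pe ne i i"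
  by (metis adjacent_def edge_joins_def ends_distinct)

lemma the_edge_joins:
  "(THE k. edge_joins pe ne k (pe l) (ne l)) = l" "(THE k. edge_joins pe ne k (ne l) (pe l)) = l"
  by (auto intro!: the_equality simp: edge_joins_def intro: edge_eqI)

lemma adjacent_pairs:
  "{p. adjacent pe ne (fst p) (snd p)} = range (\<lambda>k. (pe k, ne k)) \<union> range (\<lambda>k. (ne k, pe k))"
  by (auto simp: adjacent_def edge_joins_def)

lemma edge_orientations_disjoint: "range (\<lambda>k. (pe k, ne k)) \<inter> range (\<lambda>k. (ne k, pe k)) = {}"
proof -
  have False if "pe k = ne l" "ne k = pe l" for k l
    using edge_eqI[of k l] ends_distinct[of k] that by (auto simp: insert_commute)
  then show ?thesis by auto
qed

lemma inj_edge_ends: "inj (\<lambda>k. (pe k, ne k))" "inj (\<lambda>k. (ne k, pe k))"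
  by (auto intro!: injI edge_eqI)

lemma inner_Emat:
  assumes B_sym: "\<And>i j. B $ i $ j = B $ j $ i"
  shows "u \<bullet> (Emat pe ne B Xd Xdp eta *v w) =
     (\<Sum>i\<in>UNIV. Fdiag B Xd Xdp $ i * u $ i * w $ i)
     - (\<Sum>k\<in>UNIV. B $ pe k $ ne k * cos (eta $ k) * (u $ pe k * w $ ne k + u $ ne k * w $ pe k))"
proof -
  define h where "h i j = (if adjacent pe ne i j then - B $ i $ j * cos (eta $ (THE k. edge_joins pe ne k i j)) else 0)" for i j
  define g where "g p = u $ fst p * h (fst p) (snd p) * w $ snd p" for p
  have E: "Emat pe ne B Xd Xdp eta $ i $ j = (if i = j then Fdiag B Xd Xdp $ i else 0) + h i j" for i j
    by (simp add: Emat_def h_def not_adjacent_self)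
  have "u \<bullet> (Emat pe ne B Xd Xdp eta *v w) = (\<Sum>i\<in>UNIV. \<Sum>j\<in>UNIV. u $ i * Emat pe ne B Xd Xdp eta $ i $ j * w $ j)"
    by (simp add: inner_vec_def matrix_vector_mult_def sum_distrib_left mult.assoc)
  also have "\<dots> = (\<Sum>i\<in>UNIV. Fdiag B Xd Xdp $ i * u $ i * w $ i) + (\<Sum>p\<in>UNIV. g p)"
  proof -
    have "u $ i * Emat pe ne B Xd Xdp eta $ i $ j * w $ j
          = (if i = j then Fdiag B Xd Xdp $ i * u $ i * w $ i else 0) + g (i, j)" for i j
      by (simp add: E g_def algebra_simps)
    then show ?thesis
      by (simp add: sum.distrib sum.cartesian_product' UNIV_Times_UNIV[symmetric] del: UNIV_Times_UNIV)
  qed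
  also have "(\<Sum>p\<in>UNIV. g p) = (\<Sum>p\<in>{p. adjacent pe ne (fst p) (snd p)}. g p)"
    by (rule sum.mono_neutral_right) (auto simp: g_def h_def)
  also have "\<dots> = (\<Sum>k\<in>UNIV. g (pe k, ne k)) + (\<Sum>k\<in>UNIV. g (ne k, pe k))"
    unfolding adjacent_pairs
    by (subst sum.union_disjoint) (use edge_orientations_disjoint inj_edge_ends in \<open>auto simp: sum.reindex\<close>)
  also have "\<dots> = - (\<Sum>k\<in>UNIV. B $ pe k $ ne k * cos (eta $ k) * (u $ pe k * w $ ne k + u $ ne k * w $ pe k))"
  proof -
    have "adjacent pe ne (pe k) (ne k)" "adjacent pe ne (ne k) (pe k)" for k
      by (auto simp: adjacent_def edge_joins_def)
    then show ?thesis
      by (simp add: g_def h_def the_edge_joins B_sym[of "ne _"] sum.distrib[symmetric]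
          sum_negf[symmetric] algebra_simps)
  qed
  finally show ?thesis by simp
qed

lemma sum_abs_incidence_column:
  "(\<Sum>i\<in>UNIV. abs_mat (incidence pe ne) $ i $ k * f i) = f (pe k) + f (ne k)"
proof -
  have "abs_mat (incidence pe ne) $ i $ k * f i = (if i = pe k then f i else 0) + (if i = ne k then f i else 0)" for i
    using ends_distinct[of k] by (auto simp: abs_mat_def incidence_def)
  then show ?thesis by (simp add: sum.distrib)
qed

end

locale network_equilibrium = oriented_simple_graph pe ne
  for pe ne :: "'m::finite \<Rightarrow> 'n::finite" +
  fixes B :: "real^'n^'n" and Xd Xdp Efd :: "real^'n" and etab :: "real^'m" and Vb :: "real^'n"
  assumes B_sym: "\<And>i j. B $ i $ j = B $ j $ i"
    and B_edge: "\<And>k. 0 < B $ pe k $ ne k"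
    and etab_range: "\<And>k. - (pi/2) < etab $ k \<and> etab $ k < pi/2"
    and Vb_pos: "\<And>i. 0 < Vb $ i"
    and equil: "Emat pe ne B Xd Xdp etab *v Vb = Efd"
    and cond: "pos_def (Emat pe ne B Xd Xdp etab
                 - matrix_inv (diagm Vb) ** abs_mat (incidence pe ne) ** Gamma pe ne B Vb
                   ** diagm (vsin etab) ** matrix_inv (diagm (vcos etab)) ** diagm (vsin etab)
                   ** transpose (abs_mat (incidence pe ne)) ** matrix_inv (diagm Vb))"
begin

lemma cos_etab_pos: "0 < cos (etab $ k)"
  using etab_range[of k] by (intro cos_gt_zero_pi) auto

lemma Vb_nonzero: "Vb $ i \<noteq> 0"
  using Vb_pos[of i] by simp

lemma gam_pos: "0 < gam pe ne B Vb $ k"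
  using B_edge Vb_pos by (simp add: gam_def)

text \<open>The \<open>k\<close>-th entry of \<open>|D|\<^sup>T diag(V\<^sub>0)\<^sup>-\<^sup>1 v\<close>.\<close>

definition edge_rel_sum :: "real^'n \<Rightarrow> 'm \<Rightarrow> real" where
  "edge_rel_sum v k = v $ pe k / Vb $ pe k + v $ ne k / Vb $ ne k"

definition schur_matrix :: "real^'n^'n" where
  "schur_matrix = Emat pe ne B Xd Xdp etab
     - matrix_inv (diagm Vb) ** abs_mat (incidence pe ne) ** Gamma pe ne B Vb
       ** diagm (vsin etab) ** matrix_inv (diagm (vcos etab)) ** diagm (vsin etab)
       ** transpose (abs_mat (incidence pe ne)) ** matrix_inv (diagm Vb)"

lemma inner_schur_matrix:
  "v \<bullet> (schur_matrix *v v) = v \<bullet> (Emat pe ne B Xd Xdp etab *v v)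
     - (\<Sum>k\<in>UNIV. gam pe ne B Vb $ k * (sin (etab $ k))\<^sup>2 / cos (etab $ k) * (edge_rel_sum v k)\<^sup>2)"
proof -
  let ?A = "abs_mat (incidence pe ne)"
  have Vinv: "matrix_inv (diagm Vb) = diagm (\<chi> i. 1 / Vb $ i)"
    by (rule matrix_inv_diagm) (rule Vb_nonzero)
  have Cinv: "matrix_inv (diagm (vcos etab)) = diagm (\<chi> k. 1 / cos (etab $ k))"
    using matrix_inv_diagm[of "vcos etab"] cos_etab_pos by (simp add: vcos_def less_imp_neq[symmetric])
  have y: "((diagm (\<chi> i. 1 / Vb $ i) *v v) v* ?A) $ k = edge_rel_sum v k" for k
    using sum_abs_incidence_column[of k "\<lambda>i. v $ i / Vb $ i"]
    by (simp add: vector_matrix_mult_def matrix_vector_mult_diagm edge_rel_sum_def algebra_simps)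
  define z where "z = Gamma pe ne B Vb *v (diagm (vsin etab) *v (diagm (\<chi> k. 1 / cos (etab $ k))
                       *v (diagm (vsin etab) *v ((diagm (\<chi> i. 1 / Vb $ i) *v v) v* ?A))))"
  have z: "z $ k = gam pe ne B Vb $ k * (sin (etab $ k))\<^sup>2 / cos (etab $ k) * edge_rel_sum v k" for k
    by (simp add: z_def Gamma_def matrix_vector_mult_diagm y vsin_def power2_eq_square)
  have "v \<bullet> (diagm (\<chi> i. 1 / Vb $ i) *v (?A *v z)) = (\<Sum>i\<in>UNIV. v $ i / Vb $ i * (?A *v z) $ i)"
    by (simp add: inner_vec_def matrix_vector_mult_diagm)
  also have "\<dots> = (\<Sum>i\<in>UNIV. \<Sum>k\<in>UNIV. ?A $ i $ k * (v $ i / Vb $ i) * z $ k)"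
    by (simp add: matrix_vector_mult_def sum_distrib_left algebra_simps)
  also have "\<dots> = (\<Sum>k\<in>UNIV. (\<Sum>i\<in>UNIV. ?A $ i $ k * (v $ i / Vb $ i)) * z $ k)"
    by (subst sum.swap) (simp add: sum_distrib_right)
  also have "\<dots> = (\<Sum>k\<in>UNIV. gam pe ne B Vb $ k * (sin (etab $ k))\<^sup>2 / cos (etab $ k) * (edge_rel_sum v k)\<^sup>2)"
    unfolding sum_abs_incidence_column by (simp add: edge_rel_sum_def z power2_eq_square mult_ac)
  finally have M: "v \<bullet> (diagm (\<chi> i. 1 / Vb $ i) *v (?A *v z)) =
      (\<Sum>k\<in>UNIV. gam pe ne B Vb $ k * (sin (etab $ k))\<^sup>2 / cos (etab $ k) * (edge_rel_sum v k)\<^sup>2)" .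
  show ?thesis
    unfolding schur_matrix_def matrix_vector_mult_diff_rdistrib inner_diff_right Vinv Cinv
    by (simp add: matrix_vector_mul_assoc[symmetric] M[unfolded z_def])
qed

definition W2_quadratic :: "real^'m \<Rightarrow> real^'n \<Rightarrow> real" where
  "W2_quadratic x v = 1/2 * (\<Sum>i\<in>UNIV. Fdiag B Xd Xdp $ i * (v $ i)\<^sup>2)
     + (\<Sum>k\<in>UNIV. B $ pe k $ ne k * edge_quadratic (etab $ k) (Vb $ pe k) (Vb $ ne k) (x $ k) (v $ pe k) (v $ ne k))"

lemma W2_quadratic_completed_square:
  "W2_quadratic x v = 1/2 * (v \<bullet> (schur_matrix *v v))
     + 1/2 * (\<Sum>k\<in>UNIV. gam pe ne B Vb $ k * cos (etab $ k)
                     * (x $ k + sin (etab $ k) / cos (etab $ k) * edge_rel_sum v k)\<^sup>2)"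
proof -
  let ?g = "\<lambda>k. gam pe ne B Vb $ k" and ?c = "\<lambda>k. cos (etab $ k)" and ?s = "\<lambda>k. sin (etab $ k)"
  have edge: "B $ pe k $ ne k * edge_quadratic (etab $ k) (Vb $ pe k) (Vb $ ne k) (x $ k) (v $ pe k) (v $ ne k)
      = 1/2 * (?g k * ?c k * (x $ k + ?s k / ?c k * edge_rel_sum v k)\<^sup>2)
        - 1/2 * (?g k * (?s k)\<^sup>2 / ?c k * (edge_rel_sum v k)\<^sup>2)
        - 1/2 * (B $ pe k $ ne k * ?c k * (v $ pe k * v $ ne k + v $ ne k * v $ pe k))" for k
    using cos_etab_pos[of k] Vb_nonzero[of "pe k"] Vb_nonzero[of "ne k"]
    by (simp add: edge_quadratic_def edge_rel_sum_def gam_def field_simps power2_eq_square)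
  have "v \<bullet> (schur_matrix *v v) = (\<Sum>i\<in>UNIV. Fdiag B Xd Xdp $ i * (v $ i)\<^sup>2)
      - (\<Sum>k\<in>UNIV. B $ pe k $ ne k * ?c k * (v $ pe k * v $ ne k + v $ ne k * v $ pe k))
      - (\<Sum>k\<in>UNIV. ?g k * (?s k)\<^sup>2 / ?c k * (edge_rel_sum v k)\<^sup>2)"
    unfolding inner_schur_matrix inner_Emat[OF B_sym] by (simp add: power2_eq_square mult.assoc)
  then show ?thesis
    unfolding W2_quadratic_def edge sum_subtractf sum_distrib_left[symmetric] by simp
qed

lemma W2_quadratic_pos:
  assumes "(x, v) \<noteq> 0"
  shows "0 < W2_quadratic x v"
proof (cases "v = 0")
  case False
  then have "0 < v \<bullet> (schur_matrix *v v)"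
    using cond unfolding pos_def_def schur_matrix_def by blast
  moreover have "0 \<le> (\<Sum>k\<in>UNIV. gam pe ne B Vb $ k * cos (etab $ k)
                     * (x $ k + sin (etab $ k) / cos (etab $ k) * edge_rel_sum v k)\<^sup>2)"
    using gam_pos cos_etab_pos by (intro sum_nonneg) (simp add: less_imp_le)
  ultimately show ?thesis unfolding W2_quadratic_completed_square by simp
next
  case True
  with assms obtain j where "x $ j \<noteq> 0" by (auto simp: vec_eq_iff zero_prod_def)
  then have "0 < gam pe ne B Vb $ j * cos (etab $ j) * (x $ j)\<^sup>2"
    using gam_pos cos_etab_pos by simp
  also have "\<dots> \<le> (\<Sum>k\<in>UNIV. gam pe ne B Vb $ k * cos (etab $ k) * (x $ k)\<^sup>2)"
    using gam_pos cos_etab_pos by (intro member_le_sum) (simp_all add: less_imp_le)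
  also have "\<dots> = 2 * W2_quadratic x v"
    using True by (simp add: W2_quadratic_def edge_quadratic_def gam_def sum_distrib_left algebra_simps)
  finally show ?thesis by simp
qed

lemma edge_quadratic_scale:
  "edge_quadratic t Vi Vj (c * x) (c * p) (c * q) = c\<^sup>2 * edge_quadratic t Vi Vj x p q"
  by (simp add: edge_quadratic_def power2_eq_square algebra_simps)

lemma W2_quadratic_scaleR: "W2_quadratic (c *\<^sub>R x) (c *\<^sub>R v) = c\<^sup>2 * W2_quadratic x v"
  by (simp add: W2_quadratic_def edge_quadratic_scale sum_distrib_left power_mult_distrib algebra_simps)

lemma W2_quadratic_growth:
  obtains a where "0 < a" "\<And>x v. a * (norm (x, v))\<^sup>2 \<le> W2_quadratic x v"
proof -
  let ?q = "\<lambda>z. W2_quadratic (fst z) (snd z)"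
  have "continuous_on UNIV ?q"
    unfolding W2_quadratic_def edge_quadratic_def by (auto intro!: continuous_intros)
  moreover have "?q (c *\<^sub>R z) = c\<^sup>2 * ?q z" for c z
    by (simp add: W2_quadratic_scaleR)
  moreover have "0 < ?q z" if "z \<noteq> 0" for z
    using W2_quadratic_pos[of "fst z" "snd z"] that by simp
  ultimately obtain a where "0 < a" and growth: "\<And>z. a * (norm z)\<^sup>2 \<le> ?q z"
    using quadratic_growth_of_homogeneous by blast
  show ?thesis
    using that[OF \<open>0 < a\<close>] growth by (metis fst_conv snd_conv)
qed

lemma W2_expand:
  "W2 pe ne B Xd Xdp Efd (etab + x) etab (Vb + v) Vb =
     1/2 * (\<Sum>i\<in>UNIV. Fdiag B Xd Xdp $ i * (v $ i)\<^sup>2)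
     + (\<Sum>k\<in>UNIV. B $ pe k $ ne k * edge_energy (etab $ k) (Vb $ pe k) (Vb $ ne k) (x $ k) (v $ pe k) (v $ ne k))"
proof -
  let ?b = "\<lambda>k. B $ pe k $ ne k" and ?F = "\<lambda>i. Fdiag B Xd Xdp $ i"
  have Efd: "Efd \<bullet> (Vb + v - Vb) = (\<Sum>i\<in>UNIV. ?F i * v $ i * Vb $ i)
      - (\<Sum>k\<in>UNIV. ?b k * cos (etab $ k) * (v $ pe k * Vb $ ne k + v $ ne k * Vb $ pe k))"
    using inner_Emat[OF B_sym, of v Xd Xdp etab Vb] equil by (simp add: inner_commute)
  have edges: "(\<Sum>k\<in>UNIV. ?b k * edge_energy (etab $ k) (Vb $ pe k) (Vb $ ne k) (x $ k) (v $ pe k) (v $ ne k))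
      = (\<Sum>k\<in>UNIV. Vb $ pe k * Vb $ ne k * ?b k * cos (etab $ k))
        - (\<Sum>k\<in>UNIV. (Vb $ pe k + v $ pe k) * (Vb $ ne k + v $ ne k) * ?b k * cos (etab $ k + x $ k))
        - (\<Sum>k\<in>UNIV. Vb $ pe k * Vb $ ne k * ?b k * sin (etab $ k) * x $ k)
        + (\<Sum>k\<in>UNIV. ?b k * cos (etab $ k) * (v $ pe k * Vb $ ne k + v $ ne k * Vb $ pe k))"
    unfolding sum_subtractf[symmetric] sum.distrib[symmetric]
    by (intro sum.cong refl) (simp add: edge_energy_def algebra_simps)
  have nodes: "1/2 * (\<Sum>i\<in>UNIV. ?F i * (v $ i)\<^sup>2)
      = 1/2 * (\<Sum>i\<in>UNIV. ?F i * (Vb $ i + v $ i)\<^sup>2) - 1/2 * (\<Sum>i\<in>UNIV. ?F i * (Vb $ i)\<^sup>2)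
        - (\<Sum>i\<in>UNIV. ?F i * v $ i * Vb $ i)"
  proof -
    have "(\<Sum>i\<in>UNIV. ?F i * (Vb $ i + v $ i)\<^sup>2)
        = (\<Sum>i\<in>UNIV. ?F i * (Vb $ i)\<^sup>2) + 2 * (\<Sum>i\<in>UNIV. ?F i * v $ i * Vb $ i) + (\<Sum>i\<in>UNIV. ?F i * (v $ i)\<^sup>2)"
      unfolding sum_distrib_left sum.distrib[symmetric] by (intro sum.cong refl) (simp add: power2_eq_square algebra_simps)
    then show ?thesis by linarith
  qed
  show ?thesis
    unfolding W2_def Efd edges nodes
    by (simp add: inner_vec_def Gamma_def matrix_vector_mult_diagm gam_def vcos_def vsin_def Fmat_def
        power2_eq_square algebra_simps)
qed

lemma W2_minus_quadratic_bound:
  assumes "norm (x, v) \<le> 1"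
  shows "\<bar>W2 pe ne B Xd Xdp Efd (etab + x) etab (Vb + v) Vb - W2_quadratic x v\<bar>
         \<le> (\<Sum>k\<in>UNIV. 4 * B $ pe k $ ne k * (Vb $ pe k + 1) * (Vb $ ne k + 1)) * norm (x, v) ^ 3"
proof -
  let ?r = "norm (x, v)"
  have comp: "\<bar>x $ k\<bar> \<le> ?r" "\<bar>v $ i\<bar> \<le> ?r" for k i
    by (rule order_trans[OF component_le_norm_cart norm_fst_le], rule order_trans[OF component_le_norm_cart norm_snd_le])
  let ?d = "\<lambda>k. edge_energy (etab $ k) (Vb $ pe k) (Vb $ ne k) (x $ k) (v $ pe k) (v $ ne k)
                - edge_quadratic (etab $ k) (Vb $ pe k) (Vb $ ne k) (x $ k) (v $ pe k) (v $ ne k)"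
  have "\<bar>W2 pe ne B Xd Xdp Efd (etab + x) etab (Vb + v) Vb - W2_quadratic x v\<bar>
      = \<bar>\<Sum>k\<in>UNIV. B $ pe k $ ne k * ?d k\<bar>"
    by (simp add: W2_expand W2_quadratic_def right_diff_distrib sum_subtractf)
  also have "\<dots> \<le> (\<Sum>k\<in>UNIV. B $ pe k $ ne k * (4 * (Vb $ pe k + 1) * (Vb $ ne k + 1) * ?r ^ 3))"
  proof (intro order_trans[OF sum_abs] sum_mono)
    fix k
    show "\<bar>B $ pe k $ ne k * ?d k\<bar> \<le> B $ pe k $ ne k * (4 * (Vb $ pe k + 1) * (Vb $ ne k + 1) * ?r ^ 3)"
      unfolding abs_mult abs_of_pos[OF B_edge]
      using edge_energy_taylor[OF Vb_pos Vb_pos comp(1) comp(2) comp(2) assms] B_edge[of k]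
      by (simp add: mult_left_mono)
  qed
  also have "\<dots> = (\<Sum>k\<in>UNIV. 4 * B $ pe k $ ne k * (Vb $ pe k + 1) * (Vb $ ne k + 1)) * ?r ^ 3"
    unfolding sum_distrib_right by (intro sum.cong refl) (simp only: mult_ac)
  finally show ?thesis .
qed

theorem strict_local_min_W2:
  "strict_local_min (\<lambda>(eta, V). W2 pe ne B Xd Xdp Efd eta etab V Vb) (etab, Vb)"
proof -
  obtain a where "0 < a" and growth: "\<And>x v. a * (norm (x, v))\<^sup>2 \<le> W2_quadratic x v"
    using W2_quadratic_growth by blast
  define K where "K = (\<Sum>k\<in>UNIV. 4 * B $ pe k $ ne k * (Vb $ pe k + 1) * (Vb $ ne k + 1))"
  show ?thesis
  proof (rule strict_local_min_of_quadratic_growth[OF \<open>0 < a\<close>, where K = K])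
    fix h :: "(real^'m) \<times> (real^'n)"
    assume "norm h \<le> 1"
    moreover obtain x v where "h = (x, v)" by fastforce
    ultimately show "a * (norm h)\<^sup>2 - K * norm h ^ 3
        \<le> (\<lambda>(eta, V). W2 pe ne B Xd Xdp Efd eta etab V Vb) ((etab, Vb) + h)
          - (\<lambda>(eta, V). W2 pe ne B Xd Xdp Efd eta etab V Vb) (etab, Vb)"
      using growth[of x v] W2_minus_quadratic_bound[of x v] by (simp add: K_def W2_def abs_le_iff)
  qed
qed

end

theorem lemma2:
  fixes pe ne :: "'m::finite \<Rightarrow> 'n::finite"
    and B :: "real^'n^'n" and Xd Xdp :: "real^'n" and Efd :: "real^'n"
    and etab :: "real^'m" and Vb :: "real^'n"
  assumes graph: "simple_connected_graph pe ne"
    and B_sym: "\<forall>i j. B $ i $ j = B $ j $ i"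
    and B_edge: "\<forall>k. B $ pe k $ ne k > 0"
    and B_diag: "\<forall>i. B $ i $ i < 0"
    and B_dom: "\<forall>i. \<bar>B $ i $ i\<bar> > (\<Sum>j\<in>neighbours pe ne i. \<bar>B $ i $ j\<bar>)"
    and X_pos: "\<forall>i. Xd $ i > Xdp $ i \<and> Xdp $ i > 0"
    and etab_range: "\<forall>k. - (pi/2) < etab $ k \<and> etab $ k < pi/2"
    and Vb_pos: "\<forall>i. Vb $ i > 0"
    and equil: "Emat pe ne B Xd Xdp etab *v Vb = Efd"
    and cond: "pos_def (Emat pe ne B Xd Xdp etab
                 - matrix_inv (diagm Vb) ** abs_mat (incidence pe ne) ** Gamma pe ne B Vb
                   ** diagm (vsin etab) ** matrix_inv (diagm (vcos etab)) ** diagm (vsin etab)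
                   ** transpose (abs_mat (incidence pe ne)) ** matrix_inv (diagm Vb))"
  shows "strict_local_min (\<lambda>(eta, V). W2 pe ne B Xd Xdp Efd eta etab V Vb) (etab, Vb)"
proof -
  interpret network_equilibrium pe ne B Xd Xdp Efd etab Vb
    by unfold_locales (use graph B_sym B_edge etab_range Vb_pos equil cond in auto)
  show ?thesis by (rule strict_local_min_W2)
qed

end
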